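(* Let $\theta$ be uniformly distributed on $[0,2\pi]$, let $k\in\{1,2,3\}$ and $W=e^{-i\theta\sigma_k}$. Let $A,C$ be arbitrary linear operators on $\mathbb{C}^2$ and let $B=D=\sigma_j$ for some $j\in\{0,1,2,3\}$. Then $$\mathbb{E}_\theta\,\text{Tr}[WAW^\dagger B]\,\text{Tr}[WCW^\dagger D]=\Big[\tfrac12+\tfrac{\delta_{j0}+\delta_{jk}}{2}\Big]\text{Tr}[AB]\,\text{Tr}[CD]+\Big[-\tfrac12+\tfrac{\delta_{j0}+\delta_{jk}}{2}\Big]\text{Tr}[AB\sigma_k]\,\text{Tr}[CD\sigma_k].$$
   Context: $\sigma_0=I$, $\sigma_1,\sigma_2,\sigma_3$ are the Pauli matrices $X,Y,Z$; $\delta$ is the Kronecker delta; $\mathbb{E}_\theta g=\frac1{2\pi}\int_0^{2\pi}g\,d\theta$. *)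

theory Defs
  imports "HOL-Analysis.Analysis"
begin

text \<open>2x2 complex matrices are represented as complex^2^2 (rows/cols indexed by type 2,
  whose elements are 1 and 2).\<close>

definition mat2 :: "complex \<Rightarrow> complex \<Rightarrow> complex \<Rightarrow> complex \<Rightarrow> complex^2^2" where
  "mat2 a b c d = (\<chi> i j. if i = 1 then (if j = 1 then a else b) else (if j = 1 then c else d))"

definition pauli :: "nat \<Rightarrow> complex^2^2" where
  "pauli j = (if j = 0 then mat2 1 0 0 1
              else if j = 1 then mat2 0 1 1 0
              else if j = 2 then mat2 0 (-\<i>) \<i> 0
              else mat2 1 0 0 (-1))"

definition cadj :: "complex^2^2 \<Rightarrow> complex^2^2" where
  "cadj M = (\<chi> i j. cnj (M $ j $ i))"

definition cscale :: "complex \<Rightarrow> complex^2^2 \<Rightarrow> complex^2^2" where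
  "cscale c M = (\<chi> i j. c * M $ i $ j)"

fun mat_pow :: "complex^2^2 \<Rightarrow> nat \<Rightarrow> complex^2^2" where
  "mat_pow M 0 = mat 1"
| "mat_pow M (Suc n) = M ** mat_pow M n"

definition mexp :: "complex^2^2 \<Rightarrow> complex^2^2" where
  "mexp M = (\<chi> i j. \<Sum>n. (mat_pow M n) $ i $ j / of_nat (fact n))"

definition avg_theta :: "(real \<Rightarrow> complex) \<Rightarrow> complex" where
  "avg_theta g = complex_of_real (1 / (2 * pi)) * integral {0..2*pi} g"

definition kdelta :: "nat \<Rightarrow> nat \<Rightarrow> complex" where
  "kdelta a b = (if a = b then 1 else 0)"

end

theory Submission
  imports Defs
begin

text \<open>Since \<open>\<sigma>\<^sub>k\<close> is a Hermitian involution, \<open>W = cos \<theta> I - \<i> sin \<theta> \<sigma>\<^sub>k\<close>.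
  As \<open>\<sigma>\<^sub>k\<close> commutes or anticommutes with \<open>\<sigma>\<^sub>j\<close>, say \<open>\<sigma>\<^sub>k \<sigma>\<^sub>j = \<epsilon> \<sigma>\<^sub>j \<sigma>\<^sub>k\<close> with
  \<open>\<epsilon> = \<plusminus>1\<close>, cyclicity of the trace turns \<open>Tr[W A W\<^sup>\<dagger> \<sigma>\<^sub>j]\<close> into a trigonometric
  polynomial \<open>u + v cos 2\<theta> + w sin 2\<theta>\<close> whose coefficients are multiples of \<open>Tr[A \<sigma>\<^sub>j]\<close>
  and \<open>Tr[A \<sigma>\<^sub>j \<sigma>\<^sub>k]\<close>. The average of a product of two such polynomials is
  \<open>u u' + (v v' + w w') / 2\<close> by orthogonality of \<open>1, cos, sin\<close>.\<close>

lemma cscale_matrix_mult_left: "cscale c X ** Y = cscale c (X ** Y)"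
  by (simp add: vec_eq_iff cscale_def matrix_matrix_mult_def sum_distrib_left mult.assoc)

lemma cscale_matrix_mult_right: "X ** cscale c Y = cscale c (X ** Y)"
  by (simp add: vec_eq_iff cscale_def matrix_matrix_mult_def sum_distrib_left algebra_simps)

lemma trace_cscale: "trace (cscale c X) = c * trace X"
  by (simp add: trace_def cscale_def sum_distrib_left)

lemma cscale_cscale: "cscale a (cscale b X) = cscale (a * b) X"
  by (simp add: vec_eq_iff cscale_def mult.assoc)

lemma mat_pow_cscale_involution:
  assumes "P ** P = mat 1"
  shows "mat_pow (cscale t P) n = cscale (t ^ n) (if even n then mat 1 else P)"
proof (induction n)
  case 0
  show ?case by (simp add: vec_eq_iff cscale_def)
next
  case (Suc n)
  then show ?case
    using assms by (simp add: cscale_matrix_mult_left cscale_matrix_mult_right cscale_cscale mult.commute)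
qed

lemma mexp_cscale_involution:
  assumes "P ** P = mat 1"
  shows "mexp (cscale t P) = (\<chi> i j. cosh t * mat 1 $ i $ j + sinh t * P $ i $ j)"
proof -
  have "(\<lambda>n. mat_pow (cscale t P) n $ i $ j / of_nat (fact n))
          sums (mat 1 $ i $ j * cosh t + P $ i $ j * sinh t)" for i j
  proof -
    have "(\<lambda>n. mat 1 $ i $ j * (if even n then t ^ n /\<^sub>R fact n else 0)
              + P $ i $ j * (if even n then 0 else t ^ n /\<^sub>R fact n))
          sums (mat 1 $ i $ j * cosh t + P $ i $ j * sinh t)"
      by (intro sums_add sums_mult cosh_converges sinh_converges)
    moreover have "mat 1 $ i $ j * (if even n then t ^ n /\<^sub>R fact n else 0)
              + P $ i $ j * (if even n then 0 else t ^ n /\<^sub>R fact n)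
          = mat_pow (cscale t P) n $ i $ j / of_nat (fact n)" for n
      unfolding mat_pow_cscale_involution[OF assms]
      by (cases "even n") (simp_all add: cscale_def scaleR_conv_of_real field_simps)
    ultimately show ?thesis
      by simp
  qed
  then show ?thesis
    by (simp add: mexp_def vec_eq_iff sums_unique[symmetric] mult.commute)
qed

definition rotation :: "real \<Rightarrow> complex^2^2 \<Rightarrow> complex^2^2" where
  "rotation \<theta> P = (\<chi> i j. of_real (cos \<theta>) * mat 1 $ i $ j - \<i> * of_real (sin \<theta>) * P $ i $ j)"

lemma mexp_rotation:
  assumes "P ** P = mat 1"
  shows "mexp (cscale (- \<i> * complex_of_real \<theta>) P) = rotation \<theta> P"
  by (simp add: mexp_cscale_involution[OF assms] rotation_def cosh_conv_cos sinh_conv_sin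
      cos_of_real sin_of_real)

lemma trace_rotation_conj:
  "trace (rotation \<theta> P ** A ** cadj (rotation \<theta> P) ** B)
   = of_real (cos \<theta> ^ 2) * trace (A ** B)
     + of_real (cos \<theta> * sin \<theta>) * (\<i> * (trace (A ** cadj P ** B) - trace (P ** A ** B)))
     + of_real (sin \<theta> ^ 2) * trace (P ** A ** cadj P ** B)"
  by (simp add: rotation_def cadj_def trace_def matrix_matrix_mult_def sum_2 mat_def
      algebra_simps power2_eq_square)

lemma quadratic_form_cos_sin_double_angle:
  fixes p q r :: complex
  shows "of_real (cos \<theta> ^ 2) * p + of_real (cos \<theta> * sin \<theta>) * q + of_real (sin \<theta> ^ 2) * r
   = (p + r) / 2 + (p - r) / 2 * of_real (cos (2 * \<theta>)) + q / 2 * of_real (sin (2 * \<theta>))"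
proof -
  have cos_sq: "cos \<theta> ^ 2 = (1 + cos (2 * \<theta>)) / 2"
    and sin_sq: "sin \<theta> ^ 2 = (1 - cos (2 * \<theta>)) / 2"
    and cos_sin: "cos \<theta> * sin \<theta> = sin (2 * \<theta>) / 2"
    by (simp_all add: cos_double_cos sin_double sin_squared_eq)
  show ?thesis
    unfolding cos_sq sin_sq cos_sin by (simp add: field_simps)
qed

lemma trace_rotation_conj_commuting:
  assumes "P ** P = mat 1" and "cadj P = P" and "P ** B = cscale \<epsilon> (B ** P)"
  shows "trace (rotation \<theta> P ** A ** cadj (rotation \<theta> P) ** B)
    = (1 + \<epsilon>) / 2 * trace (A ** B)
      + (1 - \<epsilon>) / 2 * trace (A ** B) * of_real (cos (2 * \<theta>))
      + \<i> * (\<epsilon> - 1) / 2 * trace (A ** B ** P) * of_real (sin (2 * \<theta>))"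
proof -
  have APB: "trace (A ** P ** B) = \<epsilon> * trace (A ** B ** P)"
    by (simp add: assms(3) cscale_matrix_mult_right trace_cscale flip: matrix_mul_assoc)
  have PAB: "trace (P ** A ** B) = trace (A ** B ** P)"
    by (metis matrix_mul_assoc trace_mul_sym)
  have "trace (P ** A ** P ** B) = trace ((P ** B) ** (P ** A))"
    by (metis matrix_mul_assoc trace_mul_sym)
  also have "\<dots> = \<epsilon> * trace (B ** (P ** P) ** A)"
    by (simp add: assms(3) cscale_matrix_mult_left trace_cscale matrix_mul_assoc)
  also have "\<dots> = \<epsilon> * trace (A ** B)"
    by (simp add: assms(1) trace_mul_sym[of B])
  finally have PAPB: "trace (P ** A ** P ** B) = \<epsilon> * trace (A ** B)" .
  show ?thesis
    unfolding trace_rotation_conj assms(2) APB PAB PAPB quadratic_form_cos_sin_double_angle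
    by (simp add: field_simps)
qed

lemma has_integral_cos_multiple_period:
  assumes "n \<noteq> 0"
  shows "((\<lambda>x. cos (real n * x)) has_integral 0) {0..2*pi}"
proof -
  have "((\<lambda>x. cos (real n * x)) has_integral (sin (real n * (2*pi)) / n - sin (real n * 0) / n)) {0..2*pi}"
    using assms
    by (intro fundamental_theorem_of_calculus has_real_derivative_iff_has_vector_derivative[THEN iffD1])
      (auto intro!: derivative_eq_intros)
  moreover have "sin (real n * (2*pi)) = 0"
    by (metis mult.commute mult.left_commute sin_npi of_nat_numeral of_nat_mult)
  ultimately show ?thesis by simp
qed

lemma has_integral_sin_multiple_period:
  assumes "n \<noteq> 0"
  shows "((\<lambda>x. sin (real n * x)) has_integral 0) {0..2*pi}"
proof -
  have "((\<lambda>x. sin (real n * x)) has_integral (- cos (real n * (2*pi)) / n - (- cos (real n * 0) / n))) {0..2*pi}"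
    using assms
    by (intro fundamental_theorem_of_calculus has_real_derivative_iff_has_vector_derivative[THEN iffD1])
      (auto intro!: derivative_eq_intros)
  moreover have "cos (real n * (2*pi)) = 1"
    by (metis cos_int_2pin of_int_of_nat_eq mult.commute)
  ultimately show ?thesis by simp
qed

lemma has_integral_complex_trig_multiple_period:
  fixes K :: complex
  assumes "n \<noteq> 0"
  shows "((\<lambda>x. K * of_real (cos (real n * x))) has_integral 0) {0..2*pi}"
    and "((\<lambda>x. K * of_real (sin (real n * x))) has_integral 0) {0..2*pi}"
  using has_integral_mult_right[OF has_integral_of_real, of _ 0 _ K]
    has_integral_cos_multiple_period[OF assms] has_integral_sin_multiple_period[OF assms]
  by simp_all

lemma avg_theta_trig_product:
  fixes u v w u' v' w' :: complex
  assumes "n \<noteq> 0"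
  shows "avg_theta (\<lambda>\<theta>. (u + v * of_real (cos (real n * \<theta>)) + w * of_real (sin (real n * \<theta>)))
                      * (u' + v' * of_real (cos (real n * \<theta>)) + w' * of_real (sin (real n * \<theta>))))
         = u * u' + (v * v' + w * w') / 2"
proof -
  have expand: "(u + v * of_real (cos x) + w * of_real (sin x)) * (u' + v' * of_real (cos x) + w' * of_real (sin x))
      = (u * u' + (v * v' + w * w') / 2) + (u * v' + v * u') * of_real (cos x) + (u * w' + w * u') * of_real (sin x)
        + (v * v' - w * w') / 2 * of_real (cos (2 * x)) + (v * w' + w * v') / 2 * of_real (sin (2 * x))" for x
    using quadratic_form_cos_sin_double_angle[of x "v * v'" "v * w' + w * v'" "w * w'"]
    by (simp add: algebra_simps power2_eq_square)
  have double: "2 * (real n * \<theta>) = real (2 * n) * \<theta>" for \<theta>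
    by simp
  have "((\<lambda>\<theta>. (u * u' + (v * v' + w * w') / 2) + (u * v' + v * u') * of_real (cos (real n * \<theta>))
        + (u * w' + w * u') * of_real (sin (real n * \<theta>))
        + (v * v' - w * w') / 2 * of_real (cos (real (2 * n) * \<theta>))
        + (v * w' + w * v') / 2 * of_real (sin (real (2 * n) * \<theta>)))
      has_integral ((2 * pi) *\<^sub>R (u * u' + (v * v' + w * w') / 2) + 0 + 0 + 0 + 0)) {0..2*pi}"
    using assms has_integral_const_real[of "u * u' + (v * v' + w * w') / 2" 0 "2 * pi"]
    by (intro has_integral_add has_integral_complex_trig_multiple_period) simp_all
  then show ?thesis
    unfolding avg_theta_def expand double by (simp add: integral_unique scaleR_conv_of_real)
qed

lemma avg_theta_trace_conj_product:
  assumes "P ** P = mat 1" and "cadj P = P" and "P ** B = cscale \<epsilon> (B ** P)" and "\<epsilon>\<^sup>2 = 1"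
  shows "avg_theta (\<lambda>\<theta>. let W = mexp (cscale (- \<i> * complex_of_real \<theta>) P) in
            trace (W ** A ** cadj W ** B) * trace (W ** C ** cadj W ** B))
       = (3 + \<epsilon>) / 4 * trace (A ** B) * trace (C ** B)
         + (\<epsilon> - 1) / 4 * trace (A ** B ** P) * trace (C ** B ** P)"
proof -
  let ?f = "\<lambda>X \<theta>. (1 + \<epsilon>) / 2 * trace (X ** B)
      + (1 - \<epsilon>) / 2 * trace (X ** B) * of_real (cos (real 2 * \<theta>))
      + \<i> * (\<epsilon> - 1) / 2 * trace (X ** B ** P) * of_real (sin (real 2 * \<theta>))"
  have "avg_theta (\<lambda>\<theta>. let W = mexp (cscale (- \<i> * complex_of_real \<theta>) P) in
            trace (W ** A ** cadj W ** B) * trace (W ** C ** cadj W ** B))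
      = avg_theta (\<lambda>\<theta>. ?f A \<theta> * ?f C \<theta>)"
    by (simp only: Let_def mexp_rotation[OF assms(1)] trace_rotation_conj_commuting[OF assms(1-3)]
        of_nat_numeral)
  also have "\<dots> = (1 + \<epsilon>) / 2 * trace (A ** B) * ((1 + \<epsilon>) / 2 * trace (C ** B))
      + ((1 - \<epsilon>) / 2 * trace (A ** B) * ((1 - \<epsilon>) / 2 * trace (C ** B))
         + \<i> * (\<epsilon> - 1) / 2 * trace (A ** B ** P) * (\<i> * (\<epsilon> - 1) / 2 * trace (C ** B ** P))) / 2"
    by (rule avg_theta_trig_product) simp
  also have "\<dots> = ((3 + 2 * \<epsilon> + 3 * (\<epsilon> * \<epsilon>)) * trace (A ** B) * trace (C ** B)
      - (1 - 2 * \<epsilon> + \<epsilon> * \<epsilon>) * trace (A ** B ** P) * trace (C ** B ** P)) / 8"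
    by (simp add: field_simps)
  also have "\<dots> = (3 + \<epsilon>) / 4 * trace (A ** B) * trace (C ** B)
         + (\<epsilon> - 1) / 4 * trace (A ** B ** P) * trace (C ** B ** P)"
    using assms(4) by (simp add: power2_eq_square field_simps)
  finally show ?thesis .
qed

lemma pauli_involution: "pauli k ** pauli k = mat 1"
  by (simp add: pauli_def vec_eq_iff matrix_matrix_mult_def sum_2 mat2_def mat_def forall_2)

lemma cadj_pauli: "cadj (pauli k) = pauli k"
  by (simp add: pauli_def cadj_def vec_eq_iff mat2_def forall_2)

lemma pauli_commute_or_anticommute:
  assumes "k \<in> {1, 2, 3}" and "j \<in> {0, 1, 2, 3}"
  shows "pauli k ** pauli j = cscale (2 * (kdelta j 0 + kdelta j k) - 1) (pauli j ** pauli k)"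
  using assms
  by (auto simp: pauli_def kdelta_def cscale_def vec_eq_iff matrix_matrix_mult_def sum_2 mat2_def forall_2)

theorem lemma3:
  fixes A C :: "complex^2^2" and j k :: nat
  assumes "k \<in> {1, 2, 3}" and "j \<in> {0, 1, 2, 3}"
  shows "avg_theta (\<lambda>\<theta>. let W = mexp (cscale (- \<i> * complex_of_real \<theta>) (pauli k)) in
            trace (W ** A ** cadj W ** pauli j) * trace (W ** C ** cadj W ** pauli j))
       = (1/2 + (kdelta j 0 + kdelta j k) / 2) * trace (A ** pauli j) * trace (C ** pauli j)
         + (-1/2 + (kdelta j 0 + kdelta j k) / 2)
             * trace (A ** pauli j ** pauli k) * trace (C ** pauli j ** pauli k)"
proof -
  define \<delta> where "\<delta> = kdelta j 0 + kdelta j k"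
  have "\<delta> = 0 \<or> \<delta> = 1"
    using assms(1) by (auto simp: \<delta>_def kdelta_def)
  then have sign: "(2 * \<delta> - 1)\<^sup>2 = 1"
    by auto
  show ?thesis
    unfolding avg_theta_trace_conj_product[OF pauli_involution cadj_pauli
        pauli_commute_or_anticommute[OF assms, folded \<delta>_def] sign] \<delta>_def[symmetric]
    by (simp add: field_simps)
qed

end
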